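(* Let $f_1,\dots,f_n:\mathbb R^d\to\mathbb R$ be convex and differentiable with $L_i$-Lipschitz gradients ($L_i>0$), $f=\frac1n\sum_if_i$, and let $x_*\in\mathbb R^d$ be any fixed point (in the paper, a minimizer of $F=f+\psi$). For any permutation $\sigma=(\sigma^1,\dots,\sigma^n)$ of $[n]$, $$\sum_{i=2}^n\frac{L_{\sigma^i}}{n}\Big\|\sum_{j=1}^{i-1}\nabla f_{\sigma^j}(x_* )\Big\|^2\le n^2\bar L\sigma^2_{\mathrm{any}}.$$ If $\sigma$ is uniformly distributed over all permutations of $[n]$, then $$\mathbb E\left[\sum_{i=2}^n\frac{L_{\sigma^i}}{n}\Big\|\sum_{j=1}^{i-1}\nabla f_{\sigma^j}(x_* )\Big\|^2\right]\le\frac23n\bar L\sigma^2_{\mathrm{rand}}.$$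
   Context: $\bar L=\frac1n\sum_{i=1}^nL_i$; $\sigma^2_{\mathrm{any}}=\frac1n\sum_{i=1}^n\|\nabla f_i(x_* )\|^2$; $\sigma^2_{\mathrm{rand}}=\sigma^2_{\mathrm{any}}+n\|\nabla f(x_* )\|^2$; $\|\cdot\|$ is the Euclidean norm. *)

theory Defs
  imports "HOL-Analysis.Analysis" "HOL-Probability.Probability_Mass_Function"
begin

text \<open>Indices are 0-based: the components are f 0, ..., f (n-1); a permutation of [n]
  is a bijection of {..<n} (identity outside), i.e. \<sigma> permutes {..<n}.\<close>

definition Lbar :: "nat \<Rightarrow> (nat \<Rightarrow> real) \<Rightarrow> real" where
  "Lbar n L = (\<Sum>i<n. L i) / real n"

definition sigma2_any :: "nat \<Rightarrow> (nat \<Rightarrow> 'a::real_normed_vector) \<Rightarrow> real" where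
  "sigma2_any n g = (\<Sum>i<n. (norm (g i))\<^sup>2) / real n"

text \<open>g i is the gradient of f_i at x_*; the gradient of f = (1/n) sum f_i at x_* is
  (1/n) sum g i.\<close>
definition sigma2_rand :: "nat \<Rightarrow> (nat \<Rightarrow> 'a::real_normed_vector) \<Rightarrow> real" where
  "sigma2_rand n g = sigma2_any n g + real n * (norm (scaleR (1 / real n) (\<Sum>i<n. g i)))\<^sup>2"

text \<open>The shuffling quantity: sum_{i=2}^n (L_{\<sigma>^i}/n) ||sum_{j=1}^{i-1} g_{\<sigma>^j}||^2,
  written 0-based (positions 1..n-1, prefixes over positions 0..i-1).\<close>
definition shuffle_sum :: "nat \<Rightarrow> (nat \<Rightarrow> real) \<Rightarrow> (nat \<Rightarrow> 'a::real_normed_vector) \<Rightarrow> (nat \<Rightarrow> nat) \<Rightarrow> real" where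
  "shuffle_sum n L g \<sigma> = (\<Sum>i\<in>{1..<n}. L (\<sigma> i) / real n * (norm (\<Sum>j<i. g (\<sigma> j)))\<^sup>2)"

end

theory Submission
  imports Defs "HOL-Combinatorics.Multiset_Permutations"
begin

text \<open>Only the gradients at \<open>xs\<close> and the signs of the \<open>L i\<close> enter the bounds. The deterministic bound is Cauchy--Schwarz applied to every
  prefix sum. For the expectation we compute the mean exactly: in a uniformly random ordering
  of a set \<open>A\<close>, the elements preceding a fixed \<open>k\<close> form a uniformly random subset of
  \<open>A - {k}\<close> of uniformly random size, and averaging the squared norm of its sum over the sizes
  weighs \<open>\<Sum>\<^sub>b \<parallel>g b\<parallel>\<^sup>2\<close> with \<open>1/6\<close> and \<open>\<parallel>\<Sum>\<^sub>b g b\<parallel>\<^sup>2\<close> with \<open>1/3\<close>. This closed form is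
  verified by induction on \<open>A\<close>, removing the last element of the ordering; each of its terms
  is at most \<open>2/3\<close> of the right-hand side.\<close>

definition prefix_cost :: "('b \<Rightarrow> real) \<Rightarrow> ('b \<Rightarrow> 'a::real_normed_vector) \<Rightarrow> 'b list \<Rightarrow> real" where
  "prefix_cost L g xs = (\<Sum>i<length xs. L (xs ! i) * (norm (\<Sum>j<i. g (xs ! j)))\<^sup>2)"

definition energy :: "('b \<Rightarrow> 'a::real_inner) \<Rightarrow> 'b set \<Rightarrow> real" where
  "energy g B = (\<Sum>b\<in>B. (norm (g b))\<^sup>2) / 6 + (norm (sum g B))\<^sup>2 / 3"

definition expected_prefix_cost :: "('b \<Rightarrow> real) \<Rightarrow> ('b \<Rightarrow> 'a::real_inner) \<Rightarrow> 'b set \<Rightarrow> real" where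
  "expected_prefix_cost L g A = (\<Sum>k\<in>A. L k * energy g (A - {k}))"

lemma prefix_cost_snoc:
  "prefix_cost L g (xs @ [x]) = prefix_cost L g xs + L x * (norm (sum_list (map g xs)))\<^sup>2"
proof -
  have "prefix_cost L g (xs @ [x])
      = (\<Sum>i<length xs. L ((xs @ [x]) ! i) * (norm (\<Sum>j<i. g ((xs @ [x]) ! j)))\<^sup>2)
        + L x * (norm (\<Sum>j<length xs. g ((xs @ [x]) ! j)))\<^sup>2"
    by (simp add: prefix_cost_def)
  also have "(\<Sum>i<length xs. L ((xs @ [x]) ! i) * (norm (\<Sum>j<i. g ((xs @ [x]) ! j)))\<^sup>2)
      = prefix_cost L g xs"
    unfolding prefix_cost_def by (intro sum.cong refl) (simp add: nth_append)
  also have "(\<Sum>j<length xs. g ((xs @ [x]) ! j)) = sum_list (map g xs)"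
    by (simp add: nth_append sum_list_sum_nth atLeast0LessThan)
  finally show ?thesis .
qed

lemma shuffle_sum_eq_prefix_cost:
  assumes "0 < n"
  shows "shuffle_sum n L g \<sigma> = prefix_cost L g (map \<sigma> [0..<n]) / real n"
proof -
  have "prefix_cost L g (map \<sigma> [0..<n]) = (\<Sum>i<n. L (\<sigma> i) * (norm (\<Sum>j<i. g (\<sigma> j)))\<^sup>2)"
    unfolding prefix_cost_def by (intro sum.cong refl) auto
  also have "{..<n} = insert 0 {1..<n}"
    using assms by auto
  finally show ?thesis
    by (simp add: shuffle_sum_def sum_divide_distrib)
qed

lemma bij_betw_map_permutes:
  "bij_betw (\<lambda>\<sigma>. map \<sigma> [0..<n]) {\<sigma>. \<sigma> permutes {..<n}} (permutations_of_set {..<n})"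
proof -
  let ?P = "{\<sigma>. \<sigma> permutes {..<n}}" and ?list = "\<lambda>\<sigma>. map \<sigma> [0..<n]"
  have inj: "inj_on ?list ?P"
  proof (rule inj_onI, rule ext)
    fix \<sigma> \<tau> i assume \<sigma>: "\<sigma> \<in> ?P" and \<tau>: "\<tau> \<in> ?P" and eq: "?list \<sigma> = ?list \<tau>"
    show "\<sigma> i = \<tau> i"
    proof (cases "i < n")
      case True
      then have "\<sigma> i = ?list \<sigma> ! i" by simp
      also have "\<dots> = \<tau> i" using True eq by simp
      finally show ?thesis .
    next
      case False
      then show ?thesis using \<sigma> \<tau> by (simp add: permutes_not_in)
    qed
  qed
  have "?list ` ?P \<subseteq> permutations_of_set {..<n}"
  proof
    fix xs assume "xs \<in> ?list ` ?P"
    then obtain \<sigma> where \<sigma>: "\<sigma> permutes {..<n}" and xs: "xs = ?list \<sigma>" by auto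
    have "set xs = {..<n}"
      using xs permutes_image[OF \<sigma>] by (simp add: atLeast0LessThan)
    moreover have "distinct xs"
      using xs permutes_inj_on[OF \<sigma>] by (simp add: distinct_map atLeast0LessThan)
    ultimately show "xs \<in> permutations_of_set {..<n}" by auto
  qed
  then have "?list ` ?P = permutations_of_set {..<n}"
    by (rule card_subset_eq[OF finite_permutations_of_set])
       (simp add: card_image[OF inj] card_permutations card_permutations_of_set)
  with inj show ?thesis
    by (simp add: bij_betw_def)
qed

lemma sum_permutations_of_set_rev:
  "(\<Sum>xs\<in>permutations_of_set A. h (rev xs)) = (\<Sum>xs\<in>permutations_of_set A. h xs)"
proof -
  have "(\<Sum>xs\<in>permutations_of_set A. h (rev xs)) = (\<Sum>xs\<in>rev ` permutations_of_set A. h xs)"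
    by (subst sum.reindex) (auto simp: inj_on_def)
  then show ?thesis by simp
qed

lemma sum_norm_diff_sq:
  fixes g :: "'b \<Rightarrow> 'a::real_inner"
  assumes "finite B"
  shows "(\<Sum>x\<in>B. (norm (sum g B - g x))\<^sup>2)
    = real (card B) * (norm (sum g B))\<^sup>2 - 2 * (norm (sum g B))\<^sup>2 + (\<Sum>x\<in>B. (norm (g x))\<^sup>2)"
proof -
  have expand: "(norm (sum g B - g x))\<^sup>2 = (norm (sum g B))\<^sup>2 - 2 * (sum g B \<bullet> g x) + (norm (g x))\<^sup>2" for x
    by (simp add: power2_norm_eq_inner inner_diff_left inner_diff_right inner_commute)
  have "(\<Sum>x\<in>B. sum g B \<bullet> g x) = (norm (sum g B))\<^sup>2"
    by (simp add: power2_norm_eq_inner inner_sum_right)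
  then show ?thesis
    unfolding expand using assms by (simp add: sum.distrib sum_subtractf sum_distrib_left[symmetric])
qed

lemma power2_norm_diff_le:
  fixes a b :: "'a::real_inner"
  shows "(norm (a - b))\<^sup>2 \<le> 2 * (norm a)\<^sup>2 + 2 * (norm b)\<^sup>2"
proof -
  have "(norm (a - b))\<^sup>2 + (norm (a + b))\<^sup>2 = 2 * (norm a)\<^sup>2 + 2 * (norm b)\<^sup>2"
    by (simp add: power2_norm_eq_inner inner_diff inner_add inner_commute)
  then show ?thesis by (smt (verit) zero_le_power2)
qed

lemma energy_leave_one_out:
  fixes g :: "'b \<Rightarrow> 'a::real_inner"
  assumes "finite B"
  shows "(\<Sum>x\<in>B. energy g (B - {x})) + (norm (sum g B))\<^sup>2 = real (card B + 1) * energy g B"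
proof -
  define Q where "Q = (\<Sum>b\<in>B. (norm (g b))\<^sup>2)"
  define G where "G = sum g B"
  have "energy g (B - {x}) = (Q - (norm (g x))\<^sup>2) / 6 + (norm (G - g x))\<^sup>2 / 3" if "x \<in> B" for x
    using assms that by (simp add: energy_def Q_def G_def sum_diff1)
  then have "(\<Sum>x\<in>B. energy g (B - {x}))
      = (real (card B) * Q - Q) / 6 + (\<Sum>x\<in>B. (norm (G - g x))\<^sup>2) / 3"
    by (simp add: sum_divide_distrib[symmetric] sum.distrib sum_subtractf Q_def)
  also have "(\<Sum>x\<in>B. (norm (G - g x))\<^sup>2) = real (card B) * (norm G)\<^sup>2 - 2 * (norm G)\<^sup>2 + Q"
    unfolding G_def Q_def using assms by (rule sum_norm_diff_sq)
  finally show ?thesis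
    by (simp add: energy_def Q_def[symmetric] G_def[symmetric] field_simps)
qed

lemma expected_prefix_cost_leave_one_out:
  fixes g :: "'b \<Rightarrow> 'a::real_inner"
  assumes "finite A"
  shows "(\<Sum>x\<in>A. expected_prefix_cost L g (A - {x}) + L x * (norm (sum g (A - {x})))\<^sup>2)
    = real (card A) * expected_prefix_cost L g A"
proof -
  have "expected_prefix_cost L g (A - {x}) = (\<Sum>k\<in>{k\<in>A. x \<noteq> k}. L k * energy g (A - {k} - {x}))"
    for x
  proof -
    have "expected_prefix_cost L g (A - {x}) = (\<Sum>k\<in>A - {x}. L k * energy g (A - {k} - {x}))"
      unfolding expected_prefix_cost_def
      by (intro sum.cong refl) (simp add: Diff_insert[symmetric] insert_commute)
    also have "\<dots> = (\<Sum>k\<in>{k\<in>A. x \<noteq> k}. L k * energy g (A - {k} - {x}))"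
      by (intro sum.cong) auto
    finally show ?thesis .
  qed
  then have "(\<Sum>x\<in>A. expected_prefix_cost L g (A - {x}))
      = (\<Sum>x\<in>A. \<Sum>k\<in>{k\<in>A. x \<noteq> k}. L k * energy g (A - {k} - {x}))"
    by simp
  also have "\<dots> = (\<Sum>k\<in>A. \<Sum>x\<in>{x\<in>A. x \<noteq> k}. L k * energy g (A - {k} - {x}))"
    by (rule sum.swap_restrict[OF assms assms])
  also have "\<dots> = (\<Sum>k\<in>A. L k * (\<Sum>x\<in>A - {k}. energy g (A - {k} - {x})))"
    by (simp add: sum_distrib_left set_diff_eq)
  finally have "(\<Sum>x\<in>A. expected_prefix_cost L g (A - {x}) + L x * (norm (sum g (A - {x})))\<^sup>2)
      = (\<Sum>k\<in>A. L k * ((\<Sum>x\<in>A - {k}. energy g (A - {k} - {x})) + (norm (sum g (A - {k})))\<^sup>2))"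
    by (simp add: sum.distrib distrib_left)
  also have "\<dots> = (\<Sum>k\<in>A. real (card A) * (L k * energy g (A - {k})))"
  proof (rule sum.cong[OF refl])
    fix k assume "k \<in> A"
    then have "card A = card (A - {k}) + 1"
      using card.remove[OF assms] by simp
    then show "L k * ((\<Sum>x\<in>A - {k}. energy g (A - {k} - {x})) + (norm (sum g (A - {k})))\<^sup>2)
        = real (card A) * (L k * energy g (A - {k}))"
      using assms by (simp only: energy_leave_one_out finite_Diff) simp
  qed
  finally show ?thesis
    by (simp add: expected_prefix_cost_def sum_distrib_left)
qed

lemma sum_permutations_prefix_cost:
  fixes g :: "'b \<Rightarrow> 'a::real_inner"
  assumes "finite A"
  shows "(\<Sum>xs\<in>permutations_of_set A. prefix_cost L g xs) = fact (card A) * expected_prefix_cost L g A"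
  using assms
proof (induction "card A" arbitrary: A)
  case 0
  then show ?case by (simp add: prefix_cost_def expected_prefix_cost_def)
next
  case (Suc m A)
  have last_step: "(\<Sum>ys\<in>permutations_of_set (A - {x}). prefix_cost L g (rev (x # ys)))
      = fact m * (expected_prefix_cost L g (A - {x}) + L x * (norm (sum g (A - {x})))\<^sup>2)"
    if "x \<in> A" for x
  proof -
    have card_rest: "card (A - {x}) = m"
      using Suc.hyps(2) Suc.prems that by simp
    have "prefix_cost L g (rev (x # ys)) = prefix_cost L g (rev ys) + L x * (norm (sum g (A - {x})))\<^sup>2"
      if "ys \<in> permutations_of_set (A - {x})" for ys
    proof -
      have "sum g (A - {x}) = sum_list (map g ys)"
        using permutations_of_setD[OF that] sum.distinct_set_conv_list[of ys g] by simp
      then show ?thesis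
        by (simp add: prefix_cost_snoc rev_map[symmetric] sum_list_rev)
    qed
    then have "(\<Sum>ys\<in>permutations_of_set (A - {x}). prefix_cost L g (rev (x # ys)))
        = (\<Sum>ys\<in>permutations_of_set (A - {x}). prefix_cost L g ys)
          + fact m * (L x * (norm (sum g (A - {x})))\<^sup>2)"
      using Suc.prems by (simp add: sum.distrib sum_permutations_of_set_rev card_rest)
    then show ?thesis
      using Suc.hyps(1)[of "A - {x}"] Suc.prems card_rest by (simp add: algebra_simps)
  qed
  have "(\<Sum>xs\<in>permutations_of_set A. prefix_cost L g xs)
      = (\<Sum>x\<in>A. \<Sum>ys\<in>permutations_of_set (A - {x}). prefix_cost L g (rev (x # ys)))"
    unfolding sum_permutations_of_set_rev[of "prefix_cost L g" A, symmetric]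
    using Suc.hyps(2) Suc.prems
    by (subst permutations_of_set_nonempty, force)
       (subst sum.UNION_disjoint, auto simp: sum.reindex inj_on_def)
  also have "\<dots> = (\<Sum>x\<in>A. fact m * (expected_prefix_cost L g (A - {x}) + L x * (norm (sum g (A - {x})))\<^sup>2))"
    by (rule sum.cong[OF refl last_step])
  also have "\<dots> = fact m * (real (card A) * expected_prefix_cost L g A)"
    by (simp add: sum_distrib_left[symmetric] expected_prefix_cost_leave_one_out[OF Suc.prems])
  finally show ?case
    using Suc.hyps(2)[symmetric] by (simp add: algebra_simps)
qed

lemma expectation_shuffle_sum:
  fixes g :: "nat \<Rightarrow> 'a::real_inner"
  assumes "0 < n"
  shows "measure_pmf.expectation (pmf_of_set {\<sigma>. \<sigma> permutes {..<n}}) (shuffle_sum n L g)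
    = expected_prefix_cost L g {..<n} / real n"
proof -
  let ?P = "{\<sigma>. \<sigma> permutes {..<n}}"
  have "?P \<noteq> {}" using permutes_id by blast
  then have "measure_pmf.expectation (pmf_of_set ?P) (shuffle_sum n L g)
      = (\<Sum>\<sigma>\<in>?P. prefix_cost L g (map \<sigma> [0..<n])) / real n / fact n"
    by (simp add: integral_pmf_of_set finite_permutations card_permutations
        shuffle_sum_eq_prefix_cost[OF assms] sum_divide_distrib)
  also have "(\<Sum>\<sigma>\<in>?P. prefix_cost L g (map \<sigma> [0..<n])) = fact n * expected_prefix_cost L g {..<n}"
    using sum.reindex_bij_betw[OF bij_betw_map_permutes, of "prefix_cost L g"]
    by (simp add: sum_permutations_prefix_cost)
  finally show ?thesis by simp
qed

lemma energy_le:
  fixes g :: "'b \<Rightarrow> 'a::real_inner"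
  assumes "finite A" "k \<in> A"
  shows "energy g (A - {k}) \<le> 2/3 * ((\<Sum>b\<in>A. (norm (g b))\<^sup>2) + (norm (sum g A))\<^sup>2)"
proof -
  define Q where "Q = (\<Sum>b\<in>A. (norm (g b))\<^sup>2)"
  have "(norm (g k))\<^sup>2 \<le> Q"
    unfolding Q_def using assms by (intro member_le_sum) auto
  moreover have "(norm (sum g A - g k))\<^sup>2 \<le> 2 * (norm (sum g A))\<^sup>2 + 2 * (norm (g k))\<^sup>2"
    by (rule power2_norm_diff_le)
  moreover have "energy g (A - {k}) = (Q - (norm (g k))\<^sup>2) / 6 + (norm (sum g A - g k))\<^sup>2 / 3"
    using assms by (simp add: energy_def sum_diff1 Q_def)
  ultimately show ?thesis
    unfolding Q_def[symmetric] using zero_le_power2[of "norm (g k)"] by (simp add: field_simps)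
qed

lemma expected_prefix_cost_le:
  fixes g :: "'b \<Rightarrow> 'a::real_inner"
  assumes "finite A" "\<And>k. k \<in> A \<Longrightarrow> 0 \<le> L k"
  shows "expected_prefix_cost L g A
    \<le> 2/3 * (\<Sum>k\<in>A. L k) * ((\<Sum>b\<in>A. (norm (g b))\<^sup>2) + (norm (sum g A))\<^sup>2)"
proof -
  have "expected_prefix_cost L g A
      \<le> (\<Sum>k\<in>A. L k * (2/3 * ((\<Sum>b\<in>A. (norm (g b))\<^sup>2) + (norm (sum g A))\<^sup>2)))"
    unfolding expected_prefix_cost_def
    using assms by (intro sum_mono mult_left_mono energy_le) auto
  also have "\<dots> = (\<Sum>k\<in>A. L k) * (2/3 * ((\<Sum>b\<in>A. (norm (g b))\<^sup>2) + (norm (sum g A))\<^sup>2))"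
    by (rule sum_distrib_right[symmetric])
  finally show ?thesis
    by (simp only: mult_ac)
qed

lemma shuffle_sum_le:
  assumes \<sigma>: "\<sigma> permutes {..<n}" and L_nonneg: "\<And>i. i < n \<Longrightarrow> 0 \<le> L i"
  shows "shuffle_sum n L g \<sigma> \<le> (\<Sum>i<n. L i) * (\<Sum>i<n. (norm (g i))\<^sup>2)"
proof -
  define S where "S = (\<Sum>i<n. (norm (g i))\<^sup>2)"
  have \<sigma>_less: "\<sigma> i < n" if "i < n" for i
    using permutes_in_image[OF \<sigma>] that by simp
  have prefix_bound: "(norm (\<Sum>j<i. g (\<sigma> j)))\<^sup>2 / real n \<le> S" if "0 < i" "i \<le> n" for i
  proof -
    have "norm (\<Sum>j<i. g (\<sigma> j)) \<le> (\<Sum>j<i. norm (g (\<sigma> j)))"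
      by (rule norm_sum)
    also have "\<dots> \<le> (\<Sum>j<n. norm (g (\<sigma> j)))"
      using that by (intro sum_mono2) auto
    also have "\<dots> = (\<Sum>j<n. norm (g j))"
      using sum.permute[OF \<sigma>, of "\<lambda>j. norm (g j)"] by (simp add: comp_def)
    finally have "(norm (\<Sum>j<i. g (\<sigma> j)))\<^sup>2 \<le> (\<Sum>j<n. norm (g j))\<^sup>2"
      by (simp add: power_mono)
    also have "\<dots> \<le> real n * S"
      using sum_squared_le_sum_of_squares[of "\<lambda>j. norm (g j)" "{..<n}"] by (simp add: S_def mult.commute)
    finally show ?thesis
      using that by (simp add: divide_le_eq mult.commute)
  qed
  have "shuffle_sum n L g \<sigma> \<le> (\<Sum>i\<in>{1..<n}. L (\<sigma> i) * S)"
    unfolding shuffle_sum_def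
  proof (rule sum_mono)
    fix i assume i: "i \<in> {1..<n}"
    have "L (\<sigma> i) * ((norm (\<Sum>j<i. g (\<sigma> j)))\<^sup>2 / real n) \<le> L (\<sigma> i) * S"
      using i prefix_bound L_nonneg \<sigma>_less by (intro mult_left_mono) auto
    then show "L (\<sigma> i) / real n * (norm (\<Sum>j<i. g (\<sigma> j)))\<^sup>2 \<le> L (\<sigma> i) * S"
      by simp
  qed
  also have "\<dots> \<le> (\<Sum>i<n. L (\<sigma> i) * S)"
    using L_nonneg \<sigma>_less by (intro sum_mono2) (auto simp: S_def sum_nonneg)
  also have "\<dots> = (\<Sum>i<n. L i) * S"
    using sum.permute[OF \<sigma>, of "\<lambda>i. L i * S"] by (simp add: comp_def sum_distrib_right)
  finally show ?thesis by (simp add: S_def)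
qed

theorem mainTheorem13:
  fixes n :: nat
    and f :: "nat \<Rightarrow> 'a::euclidean_space \<Rightarrow> real"
    and grad :: "nat \<Rightarrow> 'a \<Rightarrow> 'a"
    and L :: "nat \<Rightarrow> real"
    and xs :: 'a
  assumes n_pos: "0 < n"
    and convex: "\<And>i. i < n \<Longrightarrow> convex_on UNIV (f i)"
    and grad: "\<And>i x. i < n \<Longrightarrow> (f i has_derivative (\<lambda>h. grad i x \<bullet> h)) (at x)"
    and L_pos: "\<And>i. i < n \<Longrightarrow> L i > 0"
    and lipschitz: "\<And>i x y. i < n \<Longrightarrow> norm (grad i x - grad i y) \<le> L i * norm (x - y)"
  shows "(\<forall>\<sigma>. \<sigma> permutes {..<n} \<longrightarrow>
            shuffle_sum n L (\<lambda>i. grad i xs) \<sigma>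
              \<le> (real n)\<^sup>2 * Lbar n L * sigma2_any n (\<lambda>i. grad i xs))
       \<and> measure_pmf.expectation (pmf_of_set {\<sigma>. \<sigma> permutes {..<n}})
            (\<lambda>\<sigma>. shuffle_sum n L (\<lambda>i. grad i xs) \<sigma>)
           \<le> 2 / 3 * real n * Lbar n L * sigma2_rand n (\<lambda>i. grad i xs)"
proof -
  define g where "g = (\<lambda>i. grad i xs)"
  define S where "S = (\<Sum>i<n. (norm (g i))\<^sup>2)"
  have L_nonneg: "\<And>i. i < n \<Longrightarrow> 0 \<le> L i"
    using L_pos by (simp add: less_imp_le)
  have "(real n)\<^sup>2 * Lbar n L * sigma2_any n g = (\<Sum>i<n. L i) * S"
    using n_pos by (simp add: Lbar_def sigma2_any_def S_def power2_eq_square)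
  then have deterministic: "\<forall>\<sigma>. \<sigma> permutes {..<n} \<longrightarrow>
      shuffle_sum n L g \<sigma> \<le> (real n)\<^sup>2 * Lbar n L * sigma2_any n g"
    using shuffle_sum_le[where L = L, OF _ L_nonneg] by (auto simp: S_def)
  have "measure_pmf.expectation (pmf_of_set {\<sigma>. \<sigma> permutes {..<n}}) (shuffle_sum n L g)
      = expected_prefix_cost L g {..<n} / real n"
    by (rule expectation_shuffle_sum[OF n_pos])
  also have "\<dots> \<le> 2/3 * (\<Sum>i<n. L i) * (S + (norm (sum g {..<n}))\<^sup>2) / real n"
    unfolding S_def by (intro divide_right_mono expected_prefix_cost_le) (simp_all add: L_nonneg)
  also have "\<dots> = 2/3 * real n * Lbar n L * sigma2_rand n g"
    using n_pos by (simp add: Lbar_def sigma2_rand_def sigma2_any_def S_def power2_eq_square field_simps)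
  finally have "measure_pmf.expectation (pmf_of_set {\<sigma>. \<sigma> permutes {..<n}}) (shuffle_sum n L g)
      \<le> 2/3 * real n * Lbar n L * sigma2_rand n g" .
  with deterministic show ?thesis
    unfolding g_def by simp
qed

end
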